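(* There exists a family of MDPs $(\mathcal{M}_n)_{n\ge1}$, where $\mathcal{M}_n$ has $2n+1$ states, such that $|V(\mathsf{est}_{\mathsf{MDP}}(\tau))|=2^n$ for every trace $\tau$ with $|\tau|>2$ that is observed with positive probability under some scheduler (i.e., $\Pr^\sigma(\tau)>0$ for some scheduler $\sigma$).
   Context: An MDP is a tuple $\langle S,\iota,\mathsf{Act},P,\mathsf{Z},\mathsf{obs}\rangle$: finite state set $S$, initial distribution $\iota\in\mathsf{Distr}(S)$, finite action set $\mathsf{Act}$, partial transition function $P\colon S\times\mathsf{Act}\rightharpoonup\mathsf{Distr}(S)$ (write $P(s,\alpha,s')=P(s,\alpha)(s')$), finite observation set $\mathsf{Z}$, observation function $\mathsf{obs}\colon S\to\mathsf{Distr}(\mathsf{Z})$; $\mathsf{AvAct}(s)=\{\alpha\mid P(s,\alpha)\text{ defined}\}\neq\emptyset$. A scheduler $\sigma$ maps each finite path $\pi=s_0a_0\dots s_n$ (with $\iota(s_0)>0$, $P(s_i,a_i)(s_{i+1})>0$) to a distribution on $\mathsf{AvAct}(s_n)$, and $\Pr^\sigma(\pi)=\iota(s_0)\prod_{i<n}\sigma(s_0a_0\dots s_i)(a_i)P(s_i,a_i)(s_{i+1})$; for a trace $\tau=z_0\dots z_n$, $|\tau|$ is its length, $\Pr(\tau\mid\pi)=\prod_i\mathsf{obs}(s_i)(z_i)$ if $\pi$ has $n+1$ states and $0$ otherwise, and $\Pr^\sigma(\tau)=\sum_\pi\Pr^\sigma(\pi)\Pr(\tau\mid\pi)$. Beliefs: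 $\mathsf{Bel}=\mathsf{Distr}(S)\cup\{\mathbf{0}\}$ in $\mathbb{R}^S$. $\mathsf{est}_{\mathsf{MDP}}(z)=\{b_z\}$ with $b_z(s)=\iota(s)\mathsf{obs}(s)(z)/\sum_{\hat s}\iota(\hat s)\mathsf{obs}(\hat s)(z)$ (or $\mathbf{0}$ if the denominator is $0$), $\mathsf{est}_{\mathsf{MDP}}(\tau\cdot z)=\bigcup_{\mathsf{bel}\in\mathsf{est}_{\mathsf{MDP}}(\tau)}\mathsf{est}^{\mathsf{up}}(\mathsf{bel},z)$, where $\mathsf{bel}'\in\mathsf{est}^{\mathsf{up}}(\mathsf{bel},z)$ iff there is $\varsigma\colon S\to\mathsf{Distr}(\mathsf{Act})$ with $\varsigma(s)$ supported in $\mathsf{AvAct}(s)$ and $\mathsf{bel}'(s')=\dfrac{\sum_s\mathsf{bel}(s)\sum_\alpha\varsigma(s)(\alpha)P(s,\alpha,s')\mathsf{obs}(s')(z)}{\sum_s\mathsf{bel}(s)\sum_\alpha\varsigma(s)(\alpha)\sum_{\hat s}P(s,\alpha,\hat s)\mathsf{obs}(\hat s)(z)}$ ($0/0=0$). $V(B)$ is the set of elements of $B$ that are not convex combinations of other elements of $B$. *)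

theory Defs
  imports "HOL-Analysis.Analysis"
begin

(* The partial transition function is modelled by
   an option type: trans s a = None means P(s,a) is undefined. *)
record ('s, 'a, 'z) mdp =
  St    :: "'s set"
  init  :: "'s \<Rightarrow> real"
  Act   :: "'a set"
  trans :: "'s \<Rightarrow> 'a \<Rightarrow> ('s \<Rightarrow> real) option"
  Obs   :: "'z set"
  obs   :: "'s \<Rightarrow> 'z \<Rightarrow> real"

definition distr :: "'x set \<Rightarrow> ('x \<Rightarrow> real) \<Rightarrow> bool" where
  "distr A d \<longleftrightarrow> (\<forall>x. 0 \<le> d x) \<and> (\<forall>x. x \<notin> A \<longrightarrow> d x = 0) \<and> sum d A = 1"

definition AvAct :: "('s, 'a, 'z) mdp \<Rightarrow> 's \<Rightarrow> 'a set" where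
  "AvAct M s = {a. trans M s a \<noteq> None}"

definition Ptr :: "('s, 'a, 'z) mdp \<Rightarrow> 's \<Rightarrow> 'a \<Rightarrow> 's \<Rightarrow> real" where
  "Ptr M s a s' = (case trans M s a of None \<Rightarrow> 0 | Some d \<Rightarrow> d s')"

definition is_mdp :: "('s, 'a, 'z) mdp \<Rightarrow> bool" where
  "is_mdp M \<longleftrightarrow> finite (St M) \<and> finite (Act M) \<and> finite (Obs M)
     \<and> distr (St M) (init M)
     \<and> (\<forall>s a. trans M s a \<noteq> None \<longrightarrow> s \<in> St M \<and> a \<in> Act M \<and> distr (St M) (the (trans M s a)))
     \<and> (\<forall>s \<in> St M. AvAct M s \<noteq> {})
     \<and> (\<forall>s \<in> St M. distr (Obs M) (obs M s))"

(* A finite path s0 a0 s1 ... sn is represented by the state list [s0,...,sn] and the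
   action list [a0,...,a(n-1)]. *)
definition valid_path :: "('s, 'a, 'z) mdp \<Rightarrow> 's list \<Rightarrow> 'a list \<Rightarrow> bool" where
  "valid_path M ss as \<longleftrightarrow> ss \<noteq> [] \<and> length ss = length as + 1 \<and> set ss \<subseteq> St M
     \<and> init M (hd ss) > 0
     \<and> (\<forall>i < length as. Ptr M (ss ! i) (as ! i) (ss ! (i + 1)) > 0)"

definition scheduler :: "('s, 'a, 'z) mdp \<Rightarrow> ('s list \<Rightarrow> 'a list \<Rightarrow> 'a \<Rightarrow> real) \<Rightarrow> bool" where
  "scheduler M \<sigma> \<longleftrightarrow> (\<forall>ss as. valid_path M ss as \<longrightarrow> distr (AvAct M (last ss)) (\<sigma> ss as))"

definition path_prob :: "('s, 'a, 'z) mdp \<Rightarrow> ('s list \<Rightarrow> 'a list \<Rightarrow> 'a \<Rightarrow> real)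
    \<Rightarrow> 's list \<Rightarrow> 'a list \<Rightarrow> real" where
  "path_prob M \<sigma> ss as = init M (hd ss) *
     (\<Prod>i < length as. \<sigma> (take (i + 1) ss) (take i as) (as ! i) * Ptr M (ss ! i) (as ! i) (ss ! (i + 1)))"

definition trace_given_path :: "('s, 'a, 'z) mdp \<Rightarrow> 'z list \<Rightarrow> 's list \<Rightarrow> real" where
  "trace_given_path M \<tau> ss = (if length ss = length \<tau> then (\<Prod>i < length \<tau>. obs M (ss ! i) (\<tau> ! i)) else 0)"

definition trace_prob :: "('s, 'a, 'z) mdp \<Rightarrow> ('s list \<Rightarrow> 'a list \<Rightarrow> 'a \<Rightarrow> real) \<Rightarrow> 'z list \<Rightarrow> real" where
  "trace_prob M \<sigma> \<tau> =
     (\<Sum>(ss, as) \<in> {(ss, as). valid_path M ss as \<and> length ss = length \<tau>}.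
        path_prob M \<sigma> ss as * trace_given_path M \<tau> ss)"

(* initial belief b_z (0 if the denominator vanishes, since x / 0 = 0) *)
definition bel_init :: "('s, 'a, 'z) mdp \<Rightarrow> 'z \<Rightarrow> 's \<Rightarrow> real" where
  "bel_init M z = (\<lambda>s. init M s * obs M s z / (\<Sum>s'\<in>St M. init M s' * obs M s' z))"

definition est_up :: "('s, 'a, 'z) mdp \<Rightarrow> ('s \<Rightarrow> real) \<Rightarrow> 'z \<Rightarrow> ('s \<Rightarrow> real) set" where
  "est_up M bel z = {bel'. \<exists>sch :: 's \<Rightarrow> 'a \<Rightarrow> real.
      (\<forall>s \<in> St M. distr (AvAct M s) (sch s)) \<and>
      bel' = (\<lambda>s'. (\<Sum>s\<in>St M. bel s * (\<Sum>a\<in>Act M. sch s a * Ptr M s a s' * obs M s' z))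
                 / (\<Sum>s\<in>St M. bel s * (\<Sum>a\<in>Act M. sch s a *
                        (\<Sum>s''\<in>St M. Ptr M s a s'' * obs M s'' z))))}"

(* est_MDP(z0 z1 ... zn); the empty trace is not used *)
fun est :: "('s, 'a, 'z) mdp \<Rightarrow> 'z list \<Rightarrow> ('s \<Rightarrow> real) set" where
  "est M [] = {}"
| "est M (z # zs) = fold (\<lambda>z' B. \<Union>bel\<in>B. est_up M bel z') zs {bel_init M z}"

definition convex_comb_of :: "('s \<Rightarrow> real) \<Rightarrow> ('s \<Rightarrow> real) set \<Rightarrow> bool" where
  "convex_comb_of b A \<longleftrightarrow> (\<exists>F u. finite F \<and> F \<subseteq> A \<and> (\<forall>x\<in>F. 0 \<le> u x) \<and> sum u F = 1
      \<and> b = (\<lambda>s. \<Sum>x\<in>F. u x * x s))"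

definition Vset :: "('s \<Rightarrow> real) set \<Rightarrow> ('s \<Rightarrow> real) set" where
  "Vset B = {b \<in> B. \<not> convex_comb_of b (B - {b})}"

end

theory Submission
  imports Defs
begin

(* The states 0, ..., 2n-1 of M_n form the pairs {2i, 2i+1}; the initial hub state 2n leads
   uniformly into all of them, and from either state of pair i action a in {0, 1} leads to 2i + a.
   There is a single observation, so the first update yields the uniform belief, and every later
   update may redistribute the mass 1/n of each pair arbitrarily inside the pair but never across
   pairs. From the third observation on the beliefs therefore form a product of n segments, a cube
   whose 2^n vertices put the whole mass of each pair on one of its two states. *)

section \<open>Convex combinations and the cube of pair beliefs\<close>

lemma convex_comb_of_pair:
  assumes "x \<in> A" "y \<in> A" "0 \<le> t" "t \<le> 1"
  shows "convex_comb_of (\<lambda>s. t * x s + (1 - t) * y s) A"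
proof (cases "x = y")
  case True
  then show ?thesis
    using assms unfolding convex_comb_of_def
    by (intro exI[of _ "{x}"] exI[of _ "\<lambda>_. 1"]) (auto simp: algebra_simps)
next
  case False
  then show ?thesis
    using assms unfolding convex_comb_of_def
    by (intro exI[of _ "{x, y}"] exI[of _ "\<lambda>z. if z = x then t else 1 - t"]) auto
qed

lemma convex_comb_of_vanishing_member:
  assumes "convex_comb_of b A" and nonneg: "\<And>x s. x \<in> A \<Longrightarrow> 0 \<le> x s"
  obtains x where "x \<in> A" "\<And>s. b s = 0 \<Longrightarrow> x s = 0"
proof -
  obtain F u where F: "finite F" "F \<subseteq> A" "\<forall>x\<in>F. 0 \<le> u x" "sum u F = 1"
    and b: "b = (\<lambda>s. \<Sum>x\<in>F. u x * x s)"
    using assms(1) unfolding convex_comb_of_def by blast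
  have "\<exists>x\<in>F. 0 < u x"
  proof (rule ccontr)
    assume "\<not> (\<exists>x\<in>F. 0 < u x)"
    then have "sum u F \<le> 0" by (intro sum_nonpos) (auto simp: not_less)
    with F(4) show False by simp
  qed
  then obtain x where x: "x \<in> F" "0 < u x" by blast
  have "x s = 0" if "b s = 0" for s
  proof -
    have "(\<Sum>y\<in>F. u y * y s) = 0" using that b by simp
    moreover have "y \<in> F \<Longrightarrow> 0 \<le> u y * y s" for y using F(2,3) nonneg by auto
    ultimately have "\<forall>y\<in>F. u y * y s = 0"
      using sum_nonneg_eq_0_iff[OF F(1), of "\<lambda>y. u y * y s"] by simp
    with x show ?thesis by force
  qed
  with x(1) F(2) that show thesis by blast
qed

lemma sum_lessThan_in_pairs:
  fixes f :: "nat \<Rightarrow> 'a::comm_monoid_add"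
  shows "(\<Sum>s<2*n. f s) = (\<Sum>i<n. f (2*i) + f (2*i+1))"
  by (induction n) (simp_all add: sum.lessThan_Suc ac_simps)

definition pair_box :: "real \<Rightarrow> nat \<Rightarrow> (nat \<Rightarrow> real) set" where
  "pair_box c n = {b. (\<forall>s. 0 \<le> b s) \<and> (\<forall>s \<ge> 2*n. b s = 0) \<and> (\<forall>i<n. b (2*i) + b (2*i+1) = c)}"

definition pair_vertex :: "real \<Rightarrow> nat \<Rightarrow> nat set \<Rightarrow> nat \<Rightarrow> real" where
  "pair_vertex c n S s = (if s < 2*n \<and> (even s \<longleftrightarrow> s div 2 \<in> S) then c else 0)"

lemma sum_pair_box:
  assumes "b \<in> pair_box c n"
  shows "sum b {..2*n} = real n * c"
proof -
  have "sum b {..2*n} = (\<Sum>s<2*n. b s)"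
    using assms by (simp add: pair_box_def lessThan_Suc_atMost[symmetric])
  also have "\<dots> = (\<Sum>i<n. c)"
    using assms by (simp add: sum_lessThan_in_pairs pair_box_def)
  finally show ?thesis by simp
qed

lemma pair_vertex_in_pair_box: "0 \<le> c \<Longrightarrow> pair_vertex c n S \<in> pair_box c n"
  by (auto simp: pair_box_def pair_vertex_def)

lemma pair_vertex_even: "i < n \<Longrightarrow> pair_vertex c n S (2*i) = (if i \<in> S then c else 0)"
  and pair_vertex_odd: "i < n \<Longrightarrow> pair_vertex c n S (2*i+1) = (if i \<in> S then 0 else c)"
  by (simp_all add: pair_vertex_def)

lemma less_double_cases:
  fixes s n :: nat
  assumes "s < 2*n"
  obtains i where "i < n" "s = 2*i \<or> s = 2*i+1"
proof
  show "s div 2 < n" "s = 2*(s div 2) \<or> s = 2*(s div 2)+1" using assms by presburger+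
qed

lemma inj_on_pair_vertex:
  assumes "c \<noteq> 0"
  shows "inj_on (pair_vertex c n) (Pow {..<n})"
proof (rule inj_onI)
  fix S T assume S: "S \<in> Pow {..<n}" and T: "T \<in> Pow {..<n}"
    and eq: "pair_vertex c n S = pair_vertex c n T"
  have "i \<in> S \<longleftrightarrow> i \<in> T" if "i < n" for i
    using fun_cong[OF eq, of "2*i"] pair_vertex_even[OF that] assms by (auto split: if_splits)
  with S T show "S = T" by blast
qed

lemma pair_box_eq_pair_vertex:
  assumes b: "b \<in> pair_box c n" and zeros: "\<And>s. pair_vertex c n S s = 0 \<Longrightarrow> b s = 0"
  shows "b = pair_vertex c n S"
proof
  fix s
  show "b s = pair_vertex c n S s"
  proof (cases "s < 2*n")
    case True
    then obtain i where i: "i < n" "s = 2*i \<or> s = 2*i+1" by (rule less_double_cases)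
    moreover have "b (2*i) + b (2*i+1) = c" using b i(1) by (simp add: pair_box_def)
    ultimately show ?thesis
      using zeros[of "2*i"] zeros[of "2*i+1"] pair_vertex_even[OF i(1)] pair_vertex_odd[OF i(1)]
      by (cases "i \<in> S") auto
  qed (use b in \<open>simp add: pair_box_def pair_vertex_def\<close>)
qed

lemma pair_vertex_not_convex_comb:
  "\<not> convex_comb_of (pair_vertex c n S) (pair_box c n - {pair_vertex c n S})"
proof
  assume "convex_comb_of (pair_vertex c n S) (pair_box c n - {pair_vertex c n S})"
  then obtain x where "x \<in> pair_box c n - {pair_vertex c n S}"
    and "\<And>s. pair_vertex c n S s = 0 \<Longrightarrow> x s = 0"
    by (rule convex_comb_of_vanishing_member) (auto simp: pair_box_def)
  then show False using pair_box_eq_pair_vertex by blast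
qed

lemma pair_box_in_vertices:
  assumes "c \<noteq> 0" and b: "b \<in> pair_box c n"
    and extreme: "\<forall>i<n. b (2*i) = 0 \<or> b (2*i) = c"
  shows "b \<in> pair_vertex c n ` Pow {..<n}"
proof -
  define S where "S = {i. i < n \<and> b (2*i) = c}"
  have "b = pair_vertex c n S"
  proof (rule pair_box_eq_pair_vertex[OF b])
    fix s assume zero: "pair_vertex c n S s = 0"
    show "b s = 0"
    proof (cases "s < 2*n")
      case True
      then obtain i where i: "i < n" "s = 2*i \<or> s = 2*i+1" by (rule less_double_cases)
      moreover have "b (2*i) + b (2*i+1) = c" using b i(1) by (simp add: pair_box_def)
      ultimately show ?thesis
        using zero extreme assms(1) pair_vertex_even[OF i(1)] pair_vertex_odd[OF i(1)]
        by (cases "i \<in> S") (auto simp: S_def)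
    qed (use b in \<open>simp add: pair_box_def\<close>)
  qed
  moreover have "S \<in> Pow {..<n}" by (auto simp: S_def)
  ultimately show ?thesis by blast
qed

lemma pair_box_convex_comb_of_non_vertex:
  assumes c: "0 < c" and b: "b \<in> pair_box c n" and non_vertex: "b \<notin> pair_vertex c n ` Pow {..<n}"
  shows "convex_comb_of b (pair_box c n - {b})"
proof -
  obtain i where i: "i < n" "b (2*i) \<noteq> 0" "b (2*i) \<noteq> c"
    using pair_box_in_vertices[OF _ b] c non_vertex by force
  have pair: "b (2*i) + b (2*i+1) = c" and nonneg: "0 \<le> b (2*i)" "0 \<le> b (2*i+1)"
    using b i(1) by (auto simp: pair_box_def)
  define b1 where "b1 = b(2*i := c, 2*i+1 := 0)"
  define b0 where "b0 = b(2*i := 0, 2*i+1 := c)"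
  define t where "t = b (2*i) / c"
  have "b1 \<in> pair_box c n" "b0 \<in> pair_box c n"
    using b c i(1) by (auto simp: pair_box_def b1_def b0_def)
  moreover have "b1 (2*i) \<noteq> b (2*i)" "b0 (2*i) \<noteq> b (2*i)"
    using i by (simp_all add: b1_def b0_def)
  moreover have "0 \<le> t" "t \<le> 1"
    using c pair nonneg by (simp_all add: t_def)
  ultimately have "convex_comb_of (\<lambda>s. t * b1 s + (1 - t) * b0 s) (pair_box c n - {b})"
    by (intro convex_comb_of_pair) auto
  moreover have "b = (\<lambda>s. t * b1 s + (1 - t) * b0 s)"
  proof
    fix s
    show "b s = t * b1 s + (1 - t) * b0 s"
      using c pair by (auto simp: b1_def b0_def t_def field_simps)
  qed
  ultimately show ?thesis by simp
qed

lemma Vset_pair_box: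
  assumes "0 < c"
  shows "Vset (pair_box c n) = pair_vertex c n ` Pow {..<n}"
proof
  show "Vset (pair_box c n) \<subseteq> pair_vertex c n ` Pow {..<n}"
    using pair_box_convex_comb_of_non_vertex[OF assms] by (auto simp: Vset_def)
  show "pair_vertex c n ` Pow {..<n} \<subseteq> Vset (pair_box c n)"
    using pair_vertex_in_pair_box pair_vertex_not_convex_comb assms by (auto simp: Vset_def)
qed

lemma card_Vset_pair_box:
  assumes "0 < c"
  shows "finite (Vset (pair_box c n))" "card (Vset (pair_box c n)) = 2 ^ n"
  using card_image[OF inj_on_pair_vertex] assms by (simp_all add: Vset_pair_box card_Pow)

lemma is_mdp_trans:
  assumes "is_mdp M" "trans M s a = Some d"
  shows "a \<in> Act M" "distr (St M) d"
proof -
  have "trans M s a \<noteq> None" using assms(2) by simp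
  with assms(1) have "a \<in> Act M \<and> distr (St M) (the (trans M s a))"
    unfolding is_mdp_def by blast
  with assms(2) show "a \<in> Act M" "distr (St M) d" by simp_all
qed

lemma Ptr_outside_St:
  assumes "is_mdp M" "s' \<notin> St M"
  shows "Ptr M s a s' = 0"
  using assms is_mdp_trans(2)[OF assms(1)] by (auto simp: distr_def Ptr_def split: option.split)

lemma sum_Ptr:
  assumes "is_mdp M" "a \<in> AvAct M s"
  shows "(\<Sum>s'\<in>St M. Ptr M s a s') = 1"
  using assms is_mdp_trans(2)[OF assms(1)] by (auto simp: distr_def Ptr_def AvAct_def)

lemma AvAct_subset_Act: "is_mdp M \<Longrightarrow> AvAct M s \<subseteq> Act M"
  using is_mdp_trans(1) by (fastforce simp: AvAct_def)

lemma est_up_blind: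
  assumes M: "is_mdp M" and blind: "\<And>s. s \<in> St M \<Longrightarrow> obs M s z = 1"
  shows "est_up M bel z = {bel'. \<exists>sch. (\<forall>s\<in>St M. distr (AvAct M s) (sch s)) \<and>
     bel' = (\<lambda>s'. (\<Sum>s\<in>St M. bel s * (\<Sum>a\<in>Act M. sch s a * Ptr M s a s')) / sum bel (St M))}"
proof -
  have Ptr_obs: "Ptr M s a s' * obs M s' z = Ptr M s a s'" for s a s'
    using blind Ptr_outside_St[OF M] by (cases "s' \<in> St M") auto
  have total: "(\<Sum>a\<in>Act M. sch s a * (\<Sum>s'\<in>St M. Ptr M s a s' * obs M s' z)) = 1"
    if "s \<in> St M" "distr (AvAct M s) (sch s)" for sch s
  proof -
    have "(\<Sum>a\<in>Act M. sch s a * (\<Sum>s'\<in>St M. Ptr M s a s' * obs M s' z)) = sum (sch s) (Act M)"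
      using that sum_Ptr[OF M] by (intro sum.cong) (auto simp: Ptr_obs distr_def)
    also have "\<dots> = sum (sch s) (AvAct M s)"
      using that AvAct_subset_Act[OF M] M
      by (intro sum.mono_neutral_right) (auto simp: is_mdp_def distr_def)
    also have "\<dots> = 1" using that by (simp add: distr_def)
    finally show ?thesis .
  qed
  have "(\<Sum>s\<in>St M. bel s * (\<Sum>a\<in>Act M. sch s a * (\<Sum>s'\<in>St M. Ptr M s a s' * obs M s' z)))
      = sum bel (St M)" if "\<forall>s\<in>St M. distr (AvAct M s) (sch s)" for sch
    using that total by simp
  then show ?thesis unfolding est_up_def by (auto simp: Ptr_obs mult.assoc)
qed

lemma trace_prob_pos_obs:
  assumes "trace_prob M \<sigma> \<tau> > 0" "i < length \<tau>"
  shows "\<exists>s. obs M s (\<tau> ! i) \<noteq> 0"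
proof (rule ccontr)
  assume "\<not> (\<exists>s. obs M s (\<tau> ! i) \<noteq> 0)"
  then have "trace_given_path M \<tau> ss = 0" for ss
    using assms(2) by (auto simp: trace_given_path_def intro!: prod_zero)
  then have "trace_prob M \<sigma> \<tau> = 0" by (simp add: trace_prob_def case_prod_beta)
  with assms(1) show False by simp
qed

definition uniform_pairs :: "nat \<Rightarrow> nat \<Rightarrow> real" where
  "uniform_pairs n s = (if s < 2*n then 1 / (2 * real n) else 0)"

definition pairs_trans :: "nat \<Rightarrow> nat \<Rightarrow> nat \<Rightarrow> (nat \<Rightarrow> real) option" where
  "pairs_trans n s a =
     (if s \<le> 2*n \<and> a \<le> 1 then
        Some (if s = 2*n then uniform_pairs n else (\<lambda>s'. if s' = 2*(s div 2) + a then 1 else 0))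
      else None)"

definition pairs_mdp :: "nat \<Rightarrow> (nat, nat, nat) mdp" where
  "pairs_mdp n = \<lparr>St = {..2*n}, init = (\<lambda>s. if s = 2*n then 1 else 0), Act = {0, 1},
     trans = pairs_trans n, Obs = {0}, obs = (\<lambda>s z. if z = 0 then 1 else 0)\<rparr>"

lemma pairs_mdp_simps [simp]:
  "St (pairs_mdp n) = {..2*n}" "Act (pairs_mdp n) = {0, 1}" "trans (pairs_mdp n) = pairs_trans n"
  "Obs (pairs_mdp n) = {0}"
  "obs (pairs_mdp n) = (\<lambda>s z. if z = 0 then 1 else 0)"
  by (simp_all add: pairs_mdp_def)

lemma init_pairs_mdp: "init (pairs_mdp n) s = (if s = 2*n then 1 else 0)"
  by (simp add: pairs_mdp_def)

lemma Ptr_pairs_mdp: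
  "Ptr (pairs_mdp n) s a s' =
     (if s \<le> 2*n \<and> a \<le> 1 then
        if s = 2*n then uniform_pairs n s' else if s' = 2*(s div 2) + a then 1 else 0
      else 0)"
  by (simp add: Ptr_def pairs_trans_def)

lemma AvAct_pairs_mdp: "s \<le> 2*n \<Longrightarrow> AvAct (pairs_mdp n) s = {0, 1}"
  by (auto simp: AvAct_def pairs_trans_def)

lemma distr_uniform_pairs:
  assumes "n \<ge> 1"
  shows "distr {..2*n} (uniform_pairs n)"
proof -
  have "sum (uniform_pairs n) {..2*n} = (\<Sum>s<2*n. 1 / (2 * real n))"
    by (simp add: uniform_pairs_def lessThan_Suc_atMost[symmetric])
  with assms show ?thesis by (auto simp: distr_def uniform_pairs_def)
qed

lemma is_mdp_pairs_mdp:
  assumes "n \<ge> 1"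
  shows "is_mdp (pairs_mdp n)"
proof -
  have "distr {..2*n} d" if "pairs_trans n s a = Some d" for s a d
  proof (cases "s = 2*n")
    case True
    with that distr_uniform_pairs[OF assms] show ?thesis by (simp add: pairs_trans_def split: if_splits)
  next
    case False
    with that have "s < 2*n" "a \<le> 1" and d: "d = (\<lambda>s'. if s' = 2*(s div 2) + a then 1 else 0)"
      by (auto simp: pairs_trans_def split: if_splits)
    then have "2*(s div 2) + a \<le> 2*n" by presburger
    with d show ?thesis by (simp add: distr_def)
  qed
  then show ?thesis
    unfolding is_mdp_def by (auto simp: distr_def AvAct_pairs_mdp init_pairs_mdp) (auto simp: pairs_trans_def split: if_splits)
qed

definition inflow :: "nat \<Rightarrow> (nat \<Rightarrow> real) \<Rightarrow> (nat \<Rightarrow> nat \<Rightarrow> real) \<Rightarrow> nat \<Rightarrow> real" where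
  "inflow n bel sch s' = bel (2*n) * uniform_pairs n s' +
     (if s' < 2*n then bel (2*(s' div 2)) * sch (2*(s' div 2)) (s' mod 2)
        + bel (2*(s' div 2) + 1) * sch (2*(s' div 2) + 1) (s' mod 2) else 0)"

lemma sum_Ptr_pairs_mdp:
  assumes "distr {0, 1} (sch (2*n))"
  shows "(\<Sum>s\<in>{..2*n}. bel s * (\<Sum>a\<in>{0, 1}. sch s a * Ptr (pairs_mdp n) s a s')) = inflow n bel sch s'"
proof -
  let ?j = "s' div 2" and ?r = "s' mod 2"
  have "sch (2*n) 0 + sch (2*n) 1 = 1" using assms by (simp add: distr_def)
  then have hub: "(\<Sum>a\<in>{0, 1}. sch (2*n) a * Ptr (pairs_mdp n) (2*n) a s') = uniform_pairs n s'"
    by (simp add: Ptr_pairs_mdp flip: distrib_right)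
  have pair: "(\<Sum>a\<in>{0, 1}. sch s a * Ptr (pairs_mdp n) s a s') = (if s div 2 = ?j then sch s ?r else 0)"
    if "s < 2*n" for s
  proof -
    have "(\<Sum>a\<in>{0, 1}. sch s a * Ptr (pairs_mdp n) s a s')
        = sch s 0 * (if s' = 2*(s div 2) then 1 else 0) + sch s 1 * (if s' = 2*(s div 2) + 1 then 1 else 0)"
      using that by (simp add: Ptr_pairs_mdp)
    also have "\<dots> = (if s div 2 = ?j then sch s ?r else 0)"
      by (cases "even s'") (auto elim!: evenE oddE simp: double_not_eq_Suc_double Suc_double_not_eq_double)
    finally show ?thesis .
  qed
  have "(\<Sum>s\<in>{..2*n}. bel s * (\<Sum>a\<in>{0, 1}. sch s a * Ptr (pairs_mdp n) s a s'))
      = bel (2*n) * (\<Sum>a\<in>{0, 1}. sch (2*n) a * Ptr (pairs_mdp n) (2*n) a s')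
        + (\<Sum>s<2*n. bel s * (\<Sum>a\<in>{0, 1}. sch s a * Ptr (pairs_mdp n) s a s'))"
    by (simp add: lessThan_Suc_atMost[symmetric])
  also have "(\<Sum>s<2*n. bel s * (\<Sum>a\<in>{0, 1}. sch s a * Ptr (pairs_mdp n) s a s'))
      = (\<Sum>s<2*n. if s div 2 = ?j then bel s * sch s ?r else 0)"
    using pair by (intro sum.cong refl) simp
  also have "\<dots> = (\<Sum>i<n. if i = ?j then bel (2*i) * sch (2*i) ?r + bel (2*i+1) * sch (2*i+1) ?r else 0)"
    unfolding sum_lessThan_in_pairs by (intro sum.cong refl) auto
  also have "\<dots> = (if s' < 2*n then bel (2*?j) * sch (2*?j) ?r + bel (2*?j+1) * sch (2*?j+1) ?r else 0)"
    by (simp add: div_less_iff_less_mult mult.commute)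
  finally show ?thesis by (simp only: hub inflow_def)
qed

lemma est_up_pairs_mdp:
  assumes "n \<ge> 1"
  shows "est_up (pairs_mdp n) bel 0 = {bel'. \<exists>sch. (\<forall>s\<le>2*n. distr {0, 1} (sch s)) \<and>
     bel' = (\<lambda>s'. inflow n bel sch s' / sum bel {..2*n})}"
proof -
  have "(\<Sum>s\<in>{..2*n}. bel s * (\<Sum>a\<in>{0, 1}. sch s a * Ptr (pairs_mdp n) s a s')) = inflow n bel sch s'"
    if "\<forall>s\<le>2*n. distr {0, 1} (sch s)" for sch s'
    using that by (intro sum_Ptr_pairs_mdp) simp
  then show ?thesis
    using est_up_blind[OF is_mdp_pairs_mdp[OF assms], of 0 bel] by (auto simp: AvAct_pairs_mdp)
qed

lemma est_up_pairs_mdp_subset_pair_box: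
  assumes "n \<ge> 1" and b: "b \<in> pair_box (1 / real n) n"
  shows "est_up (pairs_mdp n) b 0 \<subseteq> pair_box (1 / real n) n"
proof
  fix b' assume "b' \<in> est_up (pairs_mdp n) b 0"
  then obtain sch where sch: "\<forall>s\<le>2*n. distr {0, 1} (sch s)" and b': "b' = inflow n b sch"
    using sum_pair_box[OF b] assms(1) by (auto simp: est_up_pairs_mdp)
  have b_nonneg: "0 \<le> b s" for s using b by (simp add: pair_box_def)
  have b_hub: "b (2*n) = 0" and b_pair: "\<And>i. i < n \<Longrightarrow> b (2*i) + b (2*i+1) = 1 / real n"
    using b by (simp_all add: pair_box_def)
  have sch_nonneg: "0 \<le> sch s a" and sch_sum: "sch s 0 + sch s 1 = 1" if "s \<le> 2*n" for s a
    using sch that by (simp_all add: distr_def)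
  have "0 \<le> b' s" for s
  proof (cases "s < 2*n")
    case True
    then have "2*(s div 2) + 1 \<le> 2*n" by presburger
    with True show ?thesis
      by (auto simp: b' inflow_def b_hub intro!: add_nonneg_nonneg mult_nonneg_nonneg b_nonneg sch_nonneg)
  qed (simp add: b' inflow_def b_hub)
  moreover have "b' s = 0" if "2*n \<le> s" for s
    using that by (simp add: b' inflow_def uniform_pairs_def)
  moreover have "b' (2*i) + b' (2*i+1) = 1 / real n" if "i < n" for i
  proof -
    have "b' (2*i) + b' (2*i+1)
        = b (2*i) * (sch (2*i) 0 + sch (2*i) 1) + b (2*i+1) * (sch (2*i+1) 0 + sch (2*i+1) 1)"
      using that by (simp add: b' inflow_def b_hub) (simp add: algebra_simps)
    also have "\<dots> = 1 / real n"
      using that sch_sum[of "2*i"] sch_sum[of "2*i+1"] b_pair by simp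
    finally show ?thesis .
  qed
  ultimately show "b' \<in> pair_box (1 / real n) n" by (simp add: pair_box_def)
qed

lemma pair_box_subset_est_up_pairs_mdp:
  assumes n: "n \<ge> 1" and b: "b \<in> pair_box (1 / real n) n"
  shows "pair_box (1 / real n) n \<subseteq> est_up (pairs_mdp n) b 0"
proof
  fix c assume c: "c \<in> pair_box (1 / real n) n"
  \<comment> \<open>From either state of pair i, action a is taken with probability n c(2i + a): this splits
      the mass 1/n of the pair as prescribed by c.\<close>
  define sch where "sch s a =
    (if s < 2*n then if a \<le> 1 then real n * c (2*(s div 2) + a) else 0 else if a = 0 then 1 else 0)"
    for s a :: nat
  have c_pair: "\<And>i. i < n \<Longrightarrow> c (2*i) + c (2*i+1) = 1 / real n"
    using c by (simp add: pair_box_def)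
  have "distr {0, 1} (sch s)" if "s \<le> 2*n" for s
  proof (cases "s < 2*n")
    case True
    then have "s div 2 < n" by presburger
    then have "real n * c (2*(s div 2)) + real n * c (2*(s div 2) + 1) = 1"
      using c_pair n by (simp flip: distrib_left)
    with True c show ?thesis by (auto simp: distr_def sch_def pair_box_def)
  qed (auto simp: distr_def sch_def)
  moreover have "c = inflow n b sch"
  proof
    fix s'
    show "c s' = inflow n b sch s'"
    proof (cases "s' < 2*n")
      case True
      define i where "i = s' div 2"
      have i: "i < n" and s': "s' = 2*i + s' mod 2" and r: "s' mod 2 \<le> 1"
        using True unfolding i_def by presburger+
      have "sch (2*i) (s' mod 2) = real n * c s'" "sch (2*i+1) (s' mod 2) = real n * c s'"
        using i r s' by (simp_all add: sch_def)
      then have "inflow n b sch s' = (b (2*i) + b (2*i+1)) * (real n * c s')"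
        using True b by (simp add: inflow_def i_def pair_box_def algebra_simps)
      also have "\<dots> = c s'"
        using b i n by (simp add: pair_box_def)
      finally show ?thesis ..
    qed (use b c in \<open>simp add: inflow_def pair_box_def uniform_pairs_def\<close>)
  qed
  ultimately show "c \<in> est_up (pairs_mdp n) b 0"
    using sum_pair_box[OF b] n by (auto simp: est_up_pairs_mdp)
qed

lemma est_up_pairs_mdp_pair_box:
  "n \<ge> 1 \<Longrightarrow> b \<in> pair_box (1 / real n) n \<Longrightarrow> est_up (pairs_mdp n) b 0 = pair_box (1 / real n) n"
  using est_up_pairs_mdp_subset_pair_box pair_box_subset_est_up_pairs_mdp by blast

lemma est_up_pairs_mdp_init:
  assumes "n \<ge> 1"
  shows "est_up (pairs_mdp n) (init (pairs_mdp n)) 0 = {uniform_pairs n}"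
proof -
  have "inflow n (init (pairs_mdp n)) sch = uniform_pairs n" for sch
  proof
    fix s'
    have "2*(s' div 2) + 1 \<noteq> 2*n \<and> 2*(s' div 2) \<noteq> 2*n" if "s' < 2*n" using that by presburger
    then show "inflow n (init (pairs_mdp n)) sch s' = uniform_pairs n s'"
      by (simp add: inflow_def init_pairs_mdp)
  qed
  moreover have "sum (init (pairs_mdp n)) {..2*n} = 1" by (simp add: init_pairs_mdp)
  moreover have "\<exists>sch. \<forall>s\<le>2*n. distr {0, 1} (sch s :: nat \<Rightarrow> real)"
    by (intro exI[of _ "\<lambda>_ a. if a = 0 then 1 else 0"]) (simp add: distr_def)
  ultimately show ?thesis using assms by (auto simp: est_up_pairs_mdp)
qed

lemma bel_init_pairs_mdp: "bel_init (pairs_mdp n) 0 = init (pairs_mdp n)"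
  by (simp add: bel_init_def init_pairs_mdp fun_eq_iff)

lemma est_pairs_mdp:
  assumes n: "n \<ge> 1" and m: "2 \<le> m"
  shows "est (pairs_mdp n) (replicate (Suc m) 0) = pair_box (1 / real n) n"
proof -
  define step where "step = (\<lambda>B. \<Union>bel\<in>B. est_up (pairs_mdp n) bel 0)"
  have uniform: "uniform_pairs n \<in> pair_box (1 / real n) n"
    by (auto simp: pair_box_def uniform_pairs_def)
  have first: "step (step {init (pairs_mdp n)}) = pair_box (1 / real n) n"
    using uniform n by (simp add: step_def est_up_pairs_mdp_init est_up_pairs_mdp_pair_box)
  have stable: "step (pair_box (1 / real n) n) = pair_box (1 / real n) n"
    using uniform n by (auto simp: step_def est_up_pairs_mdp_pair_box)
  obtain k where "m = Suc (Suc k)" using m by (metis add_2_eq_Suc le_Suc_ex)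
  then have "est (pairs_mdp n) (replicate (Suc m) 0) = (step ^^ k) (step (step {init (pairs_mdp n)}))"
    by (simp add: step_def bel_init_pairs_mdp funpow_Suc_right)
  also have "\<dots> = pair_box (1 / real n) n"
    unfolding first by (induction k) (simp_all add: stable)
  finally show ?thesis .
qed

lemma trace_prob_pairs_mdp_pos:
  assumes "trace_prob (pairs_mdp n) \<sigma> \<tau> > 0"
  shows "\<tau> = replicate (length \<tau>) 0"
proof (rule nth_equalityI)
  fix i assume "i < length \<tau>"
  then show "\<tau> ! i = replicate (length \<tau>) 0 ! i"
    using trace_prob_pos_obs[OF assms \<open>i < length \<tau>\<close>] by (simp split: if_splits)
qed simp

theorem lemma6:
  shows "\<exists>M :: nat \<Rightarrow> (nat, nat, nat) mdp. \<forall>n \<ge> 1.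
     is_mdp (M n) \<and> card (St (M n)) = 2 * n + 1 \<and>
     (\<forall>\<tau>. length \<tau> > 2 \<and> (\<exists>\<sigma>. scheduler (M n) \<sigma> \<and> trace_prob (M n) \<sigma> \<tau> > 0) \<longrightarrow>
        finite (Vset (est (M n) \<tau>)) \<and> card (Vset (est (M n) \<tau>)) = 2 ^ n)"
proof (intro exI[of _ pairs_mdp] allI impI conjI)
  fix n :: nat
  assume n: "n \<ge> 1"
  show "is_mdp (pairs_mdp n)" using n by (rule is_mdp_pairs_mdp)
  show "card (St (pairs_mdp n)) = 2 * n + 1" by simp
  fix \<tau> :: "nat list"
  assume \<tau>: "length \<tau> > 2 \<and> (\<exists>\<sigma>. scheduler (pairs_mdp n) \<sigma> \<and> trace_prob (pairs_mdp n) \<sigma> \<tau> > 0)"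
  then obtain \<sigma> where "trace_prob (pairs_mdp n) \<sigma> \<tau> > 0" by blast
  then have zeros: "\<tau> = replicate (length \<tau>) 0" by (rule trace_prob_pairs_mdp_pos)
  obtain m where m: "2 \<le> m" "length \<tau> = Suc m"
    using \<tau> by (intro that[of "length \<tau> - 1"]) auto
  with zeros have "\<tau> = replicate (Suc m) 0" by simp
  then have "est (pairs_mdp n) \<tau> = pair_box (1 / real n) n"
    using est_pairs_mdp[OF n m(1)] by simp
  with n show "finite (Vset (est (pairs_mdp n) \<tau>))" "card (Vset (est (pairs_mdp n) \<tau>)) = 2 ^ n"
    using card_Vset_pair_box[of "1 / real n" n] by simp_all
qed

end
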